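(* Let $C$ be a conformal algebra and let $f(a_1,\dots,a_n)=\sum_{\sigma\in S_n} t_\sigma(a_{1\sigma},\dots,a_{n\sigma})$ be a homogeneous multilinear non-associative polynomial over $\Bbbk$. If $C$, regarded as a pseudoalgebra, satisfies $f^*(a_1,\dots,a_n)=\sum_{\sigma\in S_n}(\sigma\otimes_H \mathrm{id}_C)\, t^*_\sigma(a_{1\sigma},\dots,a_{n\sigma})=0$ for all $a_1,\dots,a_n\in C$, then the coefficient algebra $\operatorname{Coeff}C$ satisfies the identity $f=0$.
   Context: Let $\Bbbk$ be a field of characteristic $0$ and $H=\Bbbk[D]$ the polynomial algebra, regarded as a Hopf algebra with $\Delta(D)=D\otimes1+1\otimes D$, $\varepsilon(D)=0$, $S(D)=-D$. Sweedler notation: $\Delta(f)=f_{(1)}\otimes f_{(2)}$; iterated coproduct $\Delta^{(1)}=\mathrm{id}_H$, $\Delta^{(k+1)}=(\mathrm{id}_H\otimes\Delta^{(k)})\Delta$. $H$ acts on $H^{\otimes n}$ from the right by $(f_1\otimes\cdots\otimes f_n)h=f_1h_{(1)}\otimes\cdots\otimes f_nh_{(n)}$, and for a left $H$-module $M$ the space $H^{\otimes n}\otimes_H M$ is formed with respect to this action (so $H\otimes_H M\cong M$). A conformal algebra is a unital left $H$-module $C$ with $\Bbbk$-bilinear operations $a_{(n)}b$, $n\ge0$, such that for all $a,b\in C$: $a_{(n)}b=0$ for all sufficiently large $n$; $(Da)_{(n)}b=-n\,a_{(n-1)}b$ and $a_{(n)}(Db)=D(a_{(n)}b)+n\,a_{(n-1)}b$.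 Pseudoproduct: $a*b=\sum_{s\ge0}\frac{(-D)^s}{s!}\otimes1\otimes_H(a_{(s)}b)\in (H\otimes H)\otimes_H C$. Expanded pseudoproduct: for $F\in H^{\otimes n}$, $G\in H^{\otimes m}$, $a,b\in C$ with $a*b=\sum_i f_i\otimes g_i\otimes_H c_i$, set $(F\otimes_H a)*(G\otimes_H b)=\sum_i F\Delta^{(n)}(f_i)\otimes G\Delta^{(m)}(g_i)\otimes_H c_i\in H^{\otimes(n+m)}\otimes_H C$ (extended linearly). Coefficient algebra: $\operatorname{Coeff}C=\Bbbk[t,t^{-1}]\otimes_H C$, where $\Bbbk[t,t^{-1}]$ is a right $H$-module via $t^nD=-nt^{n-1}$; writing $a(n)=t^n\otimes_H a$, the multiplication is $a(n)b(m)=\sum_{s\ge0}\binom{n}{s}(a_{(s)}b)(n+m-s)$. Pseudo-form of an identity: each $t_\sigma(b_1,\dots,b_n)$ is a linear combination of bracketings of the word $b_1b_2\cdots b_n$ (letters in this order), and $i\sigma$ is the image of $i$ under $\sigma$. For a bracketing $t$, $t^*(b_1,\dots,b_n)\in H^{\otimes n}\otimes_H C$ is obtained by replacing every product by the expanded pseudoproduct, each $b_i\in C$ being regarded as $1\otimes_H b_i\in H\otimes_H C$; extend linearly. For $\sigma\in S_n$, $\sigma\otimes_H\mathrm{id}_C$ denotes the map on $H^{\otimes n}\otimes_H C$ induced by the permutation of tensor factors of $H^{\otimes n}$ sending the $k$-th factor to position $k\sigma$. *)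

theory Defs
  imports Complex_Main "HOL-Library.Poly_Mapping" "HOL-Library.Function_Algebras"
          "HOL-Combinatorics.Permutations"
begin

text \<open>A conformal algebra over the field 'k (char 0): a 'k-vector space C (scalar
multiplication sm) that is a left H-module for H = k[D] (i.e. D is a linear
endomorphism), with k-bilinear n-products cp n a b = a_(n) b satisfying locality and
the two sesquilinearity axioms.\<close>

definition conformal_algebra ::
  "('k::field_char_0 \<Rightarrow> 'c::ab_group_add \<Rightarrow> 'c) \<Rightarrow> ('c \<Rightarrow> 'c) \<Rightarrow> (nat \<Rightarrow> 'c \<Rightarrow> 'c \<Rightarrow> 'c) \<Rightarrow> bool"
where
  "conformal_algebra sm D cp \<longleftrightarrow>
     vector_space sm \<and>
     (\<forall>x y. D (x + y) = D x + D y) \<and> (\<forall>k x. D (sm k x) = sm k (D x)) \<and>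
     (\<forall>n x y b. cp n (x + y) b = cp n x b + cp n y b) \<and>
     (\<forall>n a x y. cp n a (x + y) = cp n a x + cp n a y) \<and>
     (\<forall>n k a b. cp n (sm k a) b = sm k (cp n a b)) \<and>
     (\<forall>n k a b. cp n a (sm k b) = sm k (cp n a b)) \<and>
     (\<forall>a b. \<exists>N. \<forall>n\<ge>N. cp n a b = 0) \<and>
     (\<forall>n a b. cp n (D a) b = sm (- of_nat n) (cp (n - 1) a b)) \<and>
     (\<forall>n a b. cp n a (D b) = D (cp n a b) + sm (of_nat n) (cp (n - 1) a b))"

definition lbound :: "(nat \<Rightarrow> 'c \<Rightarrow> 'c \<Rightarrow> 'c::zero) \<Rightarrow> 'c \<Rightarrow> 'c \<Rightarrow> nat" where
  "lbound cp a b = (LEAST N. \<forall>n\<ge>N. cp n a b = 0)"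

text \<open>Bracketing shapes of a word; the letters are filled in from left to right.\<close>
datatype shape = Lf | Nd shape shape

fun nleaves :: "shape \<Rightarrow> nat" where
  "nleaves Lf = 1"
| "nleaves (Nd l r) = nleaves l + nleaves r"

text \<open>A homogeneous multilinear polynomial
  f(a_1..a_n) = sum over sigma in S_n of t_sigma(a_(1 sigma),...,a_(n sigma)),
  t_sigma = sum over bracketings t with n leaves of coef sigma t * t;
  letters are indexed 0..n-1 and permutations are permutations of {..<n}.\<close>

text \<open>H^{\<otimes>N} is the polynomial ring k[x_0,...,x_(N-1)] (x_i = D in the i-th tensor
factor), modelled as 'k mpoly.  An element of H^{\<otimes>N} \<otimes>_k C is represented by a
finite formal sum (list) of pairs (F, c); its canonical form is the finitely supported
function monomial \<mapsto> C-coefficient.\<close>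

type_synonym 'k mpoly = "(nat \<Rightarrow>\<^sub>0 nat) \<Rightarrow>\<^sub>0 'k"

definition Var :: "nat \<Rightarrow> 'k::comm_ring_1 mpoly" where
  "Var i = Poly_Mapping.single (Poly_Mapping.single i 1) 1"

definition Cst :: "'k \<Rightarrow> 'k::comm_ring_1 mpoly" where
  "Cst c = Poly_Mapping.single 0 c"

text \<open>Delta^{(N)}(D) restricted to the factors in I: sum of x_i, i in I.\<close>
definition DeltaD :: "nat set \<Rightarrow> 'k::comm_ring_1 mpoly" where
  "DeltaD I = (\<Sum>i\<in>I. Var i)"

definition canon :: "('k::comm_ring_1 \<Rightarrow> 'c::ab_group_add \<Rightarrow> 'c) \<Rightarrow> ('k mpoly \<times> 'c) list
                     \<Rightarrow> (nat \<Rightarrow>\<^sub>0 nat) \<Rightarrow> 'c" where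
  "canon sm X = (\<lambda>\<alpha>. sum_list (map (\<lambda>(F, c). sm (Poly_Mapping.lookup F \<alpha>) c) X))"

definition uses_vars_below :: "nat \<Rightarrow> 'k::zero mpoly \<Rightarrow> bool" where
  "uses_vars_below N F \<longleftrightarrow> (\<forall>\<alpha>\<in>Poly_Mapping.keys F. Poly_Mapping.keys \<alpha> \<subseteq> {..<N})"

text \<open>The kernel of H^{\<otimes>N} \<otimes>_k C \<rightarrow> H^{\<otimes>N} \<otimes>_H C: the k-span of the elements
  F*Delta^{(N)}(D) \<otimes> c - F \<otimes> Dc  (H = k[D] is generated by D).\<close>
inductive_set hrel :: "('k::comm_ring_1 \<Rightarrow> 'c::ab_group_add \<Rightarrow> 'c) \<Rightarrow> ('c \<Rightarrow> 'c) \<Rightarrow> nat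
                       \<Rightarrow> ((nat \<Rightarrow>\<^sub>0 nat) \<Rightarrow> 'c) set"
  for sm D N where
  hrel_zero: "(\<lambda>_. 0) \<in> hrel sm D N"
| hrel_gen: "uses_vars_below N F \<Longrightarrow>
     canon sm [(F * DeltaD {..<N}, c)] - canon sm [(F, D c)] \<in> hrel sm D N"
| hrel_add: "x \<in> hrel sm D N \<Longrightarrow> y \<in> hrel sm D N \<Longrightarrow> x + y \<in> hrel sm D N"
| hrel_smul: "x \<in> hrel sm D N \<Longrightarrow> (\<lambda>\<alpha>. sm k (x \<alpha>)) \<in> hrel sm D N"

text \<open>Expanded pseudoproduct, in absolute variable numbering: X lives in the factors I
  (the first n factors), Y in the following factors; F \<otimes> G is the product F*G and
  Delta^{(n)}((-D)^s/s!) = (-(sum of x_i, i in I))^s / s!.\<close>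
definition epp :: "(nat \<Rightarrow> 'c \<Rightarrow> 'c \<Rightarrow> 'c::zero) \<Rightarrow> nat set \<Rightarrow> ('k::field_char_0 mpoly \<times> 'c) list
                   \<Rightarrow> ('k mpoly \<times> 'c) list \<Rightarrow> ('k mpoly \<times> 'c) list" where
  "epp cp I X Y = concat (map (\<lambda>(F, c). concat (map (\<lambda>(G, d).
      map (\<lambda>s. (F * G * Cst (1 / fact s) * (- DeltaD I) ^ s, cp s c d)) [0..<lbound cp c d]) Y)) X)"

text \<open>t^*(b_1,...,b_n) for a bracketing t whose leaves occupy tensor factors off, off+1, ...\<close>
fun pstar :: "(nat \<Rightarrow> 'c \<Rightarrow> 'c \<Rightarrow> 'c::zero) \<Rightarrow> nat \<Rightarrow> shape \<Rightarrow> 'c list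
              \<Rightarrow> ('k::field_char_0 mpoly \<times> 'c) list" where
  "pstar cp off Lf bs = [(1, bs ! 0)]"
| "pstar cp off (Nd l r) bs =
     epp cp {off..<off + nleaves l} (pstar cp off l (take (nleaves l) bs))
                                (pstar cp (off + nleaves l) r (drop (nleaves l) bs))"

text \<open>sigma \<otimes>_H id_C: the k-th tensor factor is moved to position sigma k, i.e. the
  monomial with exponent vector alpha goes to the one with exponent alpha \<circ> inv sigma.\<close>
definition perm_t :: "(nat \<Rightarrow> nat) \<Rightarrow> ((nat \<Rightarrow>\<^sub>0 nat) \<Rightarrow> 'c) \<Rightarrow> (nat \<Rightarrow>\<^sub>0 nat) \<Rightarrow> 'c" where
  "perm_t \<sigma> T = (\<lambda>\<beta>. T (Poly_Mapping.map_key \<sigma> \<beta>))"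

definition fstar :: "('k::field_char_0 \<Rightarrow> 'c::ab_group_add \<Rightarrow> 'c) \<Rightarrow> (nat \<Rightarrow> 'c \<Rightarrow> 'c \<Rightarrow> 'c)
       \<Rightarrow> nat \<Rightarrow> ((nat \<Rightarrow> nat) \<Rightarrow> shape \<Rightarrow> 'k) \<Rightarrow> (nat \<Rightarrow> 'c) \<Rightarrow> (nat \<Rightarrow>\<^sub>0 nat) \<Rightarrow> 'c" where
  "fstar sm cp n coef a =
     (\<Sum>\<sigma>\<in>{\<sigma>. \<sigma> permutes {..<n}}. \<Sum>t\<in>{t. nleaves t = n}.
        (\<lambda>\<beta>. sm (coef \<sigma> t)
           (perm_t \<sigma> (canon sm (pstar cp 0 t (map (\<lambda>i. a (\<sigma> i)) [0..<n]))) \<beta>)))"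

text \<open>Elements are represented by finite formal sums of a(m) = t^m \<otimes>_H a (lists of
  (m, a)); canonical representative in k[t,t^{-1}] \<otimes>_k C: function m \<mapsto> C.\<close>
definition canonC :: "(int \<times> 'c::ab_group_add) list \<Rightarrow> int \<Rightarrow> 'c" where
  "canonC X = (\<lambda>m. sum_list (map (\<lambda>(k, c). if k = m then c else 0) X))"

text \<open>Kernel of k[t,t^{-1}] \<otimes>_k C \<rightarrow> k[t,t^{-1}] \<otimes>_H C: span of
  t^m \<otimes> Da - (t^m D) \<otimes> a = (Da)(m) + m a(m-1).\<close>
inductive_set crel :: "('k::comm_ring_1 \<Rightarrow> 'c::ab_group_add \<Rightarrow> 'c) \<Rightarrow> ('c \<Rightarrow> 'c) \<Rightarrow> (int \<Rightarrow> 'c) set"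
  for sm D where
  crel_zero: "(\<lambda>_. 0) \<in> crel sm D"
| crel_gen: "canonC [(m, D a), (m - 1, sm (of_int m) a)] \<in> crel sm D"
| crel_add: "x \<in> crel sm D \<Longrightarrow> y \<in> crel sm D \<Longrightarrow> x + y \<in> crel sm D"
| crel_smul: "x \<in> crel sm D \<Longrightarrow> (\<lambda>m. sm k (x m)) \<in> crel sm D"

definition cmul :: "('k::field_char_0 \<Rightarrow> 'c::ab_group_add \<Rightarrow> 'c) \<Rightarrow> (nat \<Rightarrow> 'c \<Rightarrow> 'c \<Rightarrow> 'c)
                    \<Rightarrow> (int \<times> 'c) list \<Rightarrow> (int \<times> 'c) list \<Rightarrow> (int \<times> 'c) list" where
  "cmul sm cp X Y = concat (map (\<lambda>(n, a). concat (map (\<lambda>(m, b).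
      map (\<lambda>s. (n + m - int s, sm ((of_int n :: 'k) gchoose s) (cp s a b))) [0..<lbound cp a b]) Y)) X)"

fun evalC :: "('k::field_char_0 \<Rightarrow> 'c::ab_group_add \<Rightarrow> 'c) \<Rightarrow> (nat \<Rightarrow> 'c \<Rightarrow> 'c \<Rightarrow> 'c)
              \<Rightarrow> shape \<Rightarrow> (int \<times> 'c) list list \<Rightarrow> (int \<times> 'c) list" where
  "evalC sm cp Lf xs = xs ! 0"
| "evalC sm cp (Nd l r) xs =
     cmul sm cp (evalC sm cp l (take (nleaves l) xs)) (evalC sm cp r (drop (nleaves l) xs))"

definition fcoeff :: "('k::field_char_0 \<Rightarrow> 'c::ab_group_add \<Rightarrow> 'c) \<Rightarrow> (nat \<Rightarrow> 'c \<Rightarrow> 'c \<Rightarrow> 'c)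
       \<Rightarrow> nat \<Rightarrow> ((nat \<Rightarrow> nat) \<Rightarrow> shape \<Rightarrow> 'k) \<Rightarrow> (nat \<Rightarrow> (int \<times> 'c) list) \<Rightarrow> int \<Rightarrow> 'c" where
  "fcoeff sm cp n coef x =
     (\<Sum>\<sigma>\<in>{\<sigma>. \<sigma> permutes {..<n}}. \<Sum>t\<in>{t. nleaves t = n}.
        (\<lambda>m. sm (coef \<sigma> t) (canonC (evalC sm cp t (map (\<lambda>i. x (\<sigma> i)) [0..<n])) m)))"

end

theory Submission
  imports Defs
begin

text \<open>Fix integer exponents \<open>m 0, ..., m (n-1)\<close>. The map sending \<open>F \<otimes> c\<close> to
  \<open>(t^(m 0) \<otimes> ... \<otimes> t^(m (n-1))) F \<otimes>\<^sub>H c \<in> Coeff C\<close>, with the tensor factors multiplied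
  out, kills the relations \<open>F \<Delta>(D) \<otimes> c - F \<otimes> Dc\<close>, so it is defined on
  \<open>H^(\<otimes>n) \<otimes>\<^sub>H C\<close>. It turns \<open>\<sigma> \<otimes>\<^sub>H id\<close> into the permutation of the exponents, and the
  expanded pseudoproduct into the product of \<open>Coeff C\<close>, because \<open>(-D)^s/s!\<close> acts on
  \<open>t^p\<close> as the binomial coefficient \<open>p choose s\<close>. It therefore sends
  \<open>f^*(a_0, ..., a_(n-1))\<close> to \<open>f(a_0(m 0), ..., a_(n-1)(m (n-1)))\<close>, which consequently
  vanishes; multilinearity extends this from single terms \<open>a(m)\<close> to all of \<open>Coeff C\<close>.\<close>

abbreviation lookup where "lookup \<equiv> Poly_Mapping.lookup"
abbreviation keys where "keys \<equiv> Poly_Mapping.keys"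
abbreviation single where "single \<equiv> Poly_Mapping.single"

lemma sum_list_map_concat: "sum_list (map f (concat XS)) = sum_list (map (\<lambda>X. sum_list (map f X)) XS)"
  by (induction XS) auto

lemma sum_list_map_swap:
  fixes f :: "'a \<Rightarrow> 'b \<Rightarrow> 'c::comm_monoid_add"
  shows "sum_list (map (\<lambda>x. sum_list (map (f x) ys)) xs) =
    sum_list (map (\<lambda>y. sum_list (map (\<lambda>x. f x y) xs)) ys)"
  by (induction xs) (auto simp: sum_list_addf)

lemma sum_fun_apply: "(\<Sum>i\<in>A. f i) x = (\<Sum>i\<in>A. f i x)"
  by (induction A rule: infinite_finite_induct) auto

lemma map_permuted_fun_upd:
  assumes "\<sigma> permutes {..<n}" "i < n"
  shows "map (\<lambda>l. (x(i := Z)) (\<sigma> l)) [0..<n] = (map (\<lambda>l. x (\<sigma> l)) [0..<n])[inv \<sigma> i := Z]"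
proof (rule nth_equalityI)
  fix l assume "l < length (map (\<lambda>l. (x(i := Z)) (\<sigma> l)) [0..<n])"
  moreover have "\<sigma> l = i \<longleftrightarrow> l = inv \<sigma> i"
    using permutes_inv_eq[OF assms(1), of i l] by auto
  ultimately show "map (\<lambda>l. (x(i := Z)) (\<sigma> l)) [0..<n] ! l =
      (map (\<lambda>l. x (\<sigma> l)) [0..<n])[inv \<sigma> i := Z] ! l"
    by (auto simp: nth_list_update)
qed simp

lemma permutes_inv_less: "\<sigma> permutes {..<n} \<Longrightarrow> i < n \<Longrightarrow> inv \<sigma> i < n"
  using permutes_in_image[OF permutes_inv, of \<sigma> "{..<n}" i] by simp

lemma nleaves_pos: "nleaves t > 0"
  by (induction t) auto

lemma finite_shapes_le: "finite {t. nleaves t \<le> n}"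
proof (induction n)
  case 0
  have "\<forall>t. \<not> nleaves t \<le> 0"
    using nleaves_pos by (simp add: not_le)
  then have "{t. nleaves t \<le> 0} = {}"
    by blast
  then show ?case
    by (metis finite.emptyI)
next
  case (Suc n)
  let ?smaller = "{t. nleaves t \<le> n}"
  have "{t. nleaves t \<le> Suc n} \<subseteq> insert Lf ((\<lambda>(l, r). Nd l r) ` (?smaller \<times> ?smaller))"
  proof
    fix t assume t: "t \<in> {t. nleaves t \<le> Suc n}"
    show "t \<in> insert Lf ((\<lambda>(l, r). Nd l r) ` (?smaller \<times> ?smaller))"
    proof (cases t)
      case (Nd l r)
      have "nleaves l > 0" "nleaves r > 0"
        by (rule nleaves_pos)+
      then show ?thesis
        using t Nd by (auto intro!: image_eqI[of _ _ "(l, r)"])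
    qed simp
  qed
  moreover have "finite (insert Lf ((\<lambda>(l, r). Nd l r) ` (?smaller \<times> ?smaller)))"
    using Suc by simp
  ultimately show ?case
    by (rule finite_subset)
qed

lemma finite_shapes: "finite {t. nleaves t = n}"
  by (rule finite_subset[OF _ finite_shapes_le[of n]]) auto

section \<open>Polynomials in \<open>H^(\<otimes>n)\<close>\<close>

definition lin_ext :: "((nat \<Rightarrow>\<^sub>0 nat) \<Rightarrow> 'k::comm_ring_1) \<Rightarrow> 'k mpoly \<Rightarrow> 'k" where
  "lin_ext g F = (\<Sum>\<alpha>\<in>keys F. lookup F \<alpha> * g \<alpha>)"

lemma lin_ext_superset:
  "finite S \<Longrightarrow> keys F \<subseteq> S \<Longrightarrow> lin_ext g F = (\<Sum>\<alpha>\<in>S. lookup F \<alpha> * g \<alpha>)"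
  unfolding lin_ext_def by (rule sum.mono_neutral_left) (auto simp: in_keys_iff)

lemma lin_ext_cong: "(\<And>\<alpha>. \<alpha> \<in> keys F \<Longrightarrow> g \<alpha> = g' \<alpha>) \<Longrightarrow> lin_ext g F = lin_ext g' F"
  by (simp add: lin_ext_def)

lemma lin_ext_zero [simp]: "lin_ext g 0 = 0"
  by (simp add: lin_ext_def)

lemma lin_ext_single [simp]: "lin_ext g (single \<alpha> c) = c * g \<alpha>"
  by (simp add: lin_ext_def)

lemma lin_ext_one [simp]: "lin_ext g 1 = g 0"
  by (metis lin_ext_single Poly_Mapping.single_one mult_1)

lemma lin_ext_add: "lin_ext g (F + G) = lin_ext g F + lin_ext g G"
proof -
  let ?S = "keys F \<union> keys G"
  have "lin_ext g (F + G) = (\<Sum>\<alpha>\<in>?S. lookup (F + G) \<alpha> * g \<alpha>)"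
    by (rule lin_ext_superset) (auto dest: set_mp[OF Poly_Mapping.keys_add])
  also have "\<dots> = (\<Sum>\<alpha>\<in>?S. lookup F \<alpha> * g \<alpha>) + (\<Sum>\<alpha>\<in>?S. lookup G \<alpha> * g \<alpha>)"
    by (simp add: Poly_Mapping.lookup_add distrib_right sum.distrib)
  finally show ?thesis
    using lin_ext_superset[of ?S F g] lin_ext_superset[of ?S G g] by simp
qed

lemma lin_ext_uminus: "lin_ext g (- F) = - lin_ext g F"
  using lin_ext_add[of g F "- F"] by (simp add: eq_neg_iff_add_eq_0 add.commute)

lemma lin_ext_sum: "lin_ext g (\<Sum>i\<in>A. F i) = (\<Sum>i\<in>A. lin_ext g (F i))"
  by (induction A rule: infinite_finite_induct) (auto simp: lin_ext_add)

lemma lin_ext_mult: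
  "lin_ext g (F * G) = (\<Sum>\<alpha>\<in>keys F. \<Sum>\<beta>\<in>keys G. lookup F \<alpha> * lookup G \<beta> * g (\<alpha> + \<beta>))"
proof -
  have monomials: "(\<Sum>\<alpha>\<in>keys P. single \<alpha> (lookup P \<alpha>)) = P" for P :: "'a mpoly"
    by (rule poly_mapping_eqI)
      (auto simp: Poly_Mapping.lookup_sum Poly_Mapping.lookup_single when_def in_keys_iff)
  have "F * G = (\<Sum>\<alpha>\<in>keys F. single \<alpha> (lookup F \<alpha>)) * (\<Sum>\<beta>\<in>keys G. single \<beta> (lookup G \<beta>))"
    by (simp only: monomials)
  also have "\<dots> = (\<Sum>\<alpha>\<in>keys F. \<Sum>\<beta>\<in>keys G. single (\<alpha> + \<beta>) (lookup F \<alpha> * lookup G \<beta>))"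
    by (simp add: sum_distrib_left sum_distrib_right Poly_Mapping.mult_single) (rule sum.swap)
  finally show ?thesis
    by (simp add: lin_ext_sum)
qed

lemma lin_ext_Cst_mult: "lin_ext g (Cst c * F) = c * lin_ext g F"
  unfolding Cst_def lin_ext_mult by (simp add: sum_distrib_left lin_ext_def mult.assoc)

lemma lin_ext_mult_DeltaD:
  "lin_ext g (F * DeltaD I) = lin_ext (\<lambda>\<alpha>. \<Sum>i\<in>I. g (\<alpha> + single i 1)) F"
proof -
  have "lin_ext g (F * Var i) = lin_ext (\<lambda>\<alpha>. g (\<alpha> + single i 1)) F" for i
    unfolding Var_def lin_ext_mult by (simp add: lin_ext_def)
  then show ?thesis
    unfolding DeltaD_def sum_distrib_left lin_ext_sum
    by (simp add: lin_ext_def sum_distrib_left) (rule sum.swap)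
qed

definition tdeg :: "(nat \<Rightarrow>\<^sub>0 nat) \<Rightarrow> nat" where
  "tdeg \<alpha> = (\<Sum>i\<in>keys \<alpha>. lookup \<alpha> i)"

lemma keys_add_nat: "keys (\<alpha> + \<beta>) = keys \<alpha> \<union> keys (\<beta> :: nat \<Rightarrow>\<^sub>0 nat)"
  by (auto simp: in_keys_iff Poly_Mapping.lookup_add)

lemma tdeg_superset: "finite S \<Longrightarrow> keys \<alpha> \<subseteq> S \<Longrightarrow> tdeg \<alpha> = (\<Sum>i\<in>S. lookup \<alpha> i)"
  unfolding tdeg_def by (rule sum.mono_neutral_left) (auto simp: in_keys_iff)

lemma tdeg_add: "tdeg (\<alpha> + \<beta>) = tdeg \<alpha> + tdeg \<beta>"
proof -
  let ?S = "keys \<alpha> \<union> keys \<beta>"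
  have "tdeg (\<alpha> + \<beta>) = (\<Sum>i\<in>?S. lookup (\<alpha> + \<beta>) i)"
    by (rule tdeg_superset) (auto simp: keys_add_nat)
  also have "\<dots> = (\<Sum>i\<in>?S. lookup \<alpha> i) + (\<Sum>i\<in>?S. lookup \<beta> i)"
    by (simp add: Poly_Mapping.lookup_add sum.distrib)
  finally show ?thesis
    using tdeg_superset[of ?S \<alpha>] tdeg_superset[of ?S \<beta>] by simp
qed

lemma tdeg_zero [simp]: "tdeg 0 = 0"
  by (simp add: tdeg_def)

lemma tdeg_single [simp]: "tdeg (single i k) = k"
  by (simp add: tdeg_def)

text \<open>In \<open>k[t, t^-1]\<close> one has \<open>t^p D^a = pochhammer (-p) a * t^(p - a)\<close>. Hence the
  monomial \<open>x^\<alpha>\<close> of \<open>H^(\<otimes>n) = k[x_0, ..., x_(n-1)]\<close> maps \<open>t^(m 0) \<otimes> ... \<otimes> t^(m (n-1))\<close>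
  to \<open>mono_weight m \<alpha>\<close> times the tensor product of the \<open>t^(m i - \<alpha> i)\<close>.\<close>
definition mono_weight :: "(nat \<Rightarrow> int) \<Rightarrow> (nat \<Rightarrow>\<^sub>0 nat) \<Rightarrow> 'k::comm_ring_1" where
  "mono_weight m \<alpha> = (\<Prod>i\<in>keys \<alpha>. pochhammer (- of_int (m i)) (lookup \<alpha> i))"

lemma mono_weight_superset:
  "finite S \<Longrightarrow> keys \<alpha> \<subseteq> S \<Longrightarrow> mono_weight m \<alpha> = (\<Prod>i\<in>S. pochhammer (- of_int (m i)) (lookup \<alpha> i))"
  unfolding mono_weight_def by (rule prod.mono_neutral_left) (auto simp: in_keys_iff)

lemma mono_weight_zero [simp]: "mono_weight m 0 = 1"
  by (simp add: mono_weight_def)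

lemma mono_weight_add:
  assumes "keys \<alpha> \<inter> keys \<beta> = {}"
  shows "mono_weight m (\<alpha> + \<beta>) = mono_weight m \<alpha> * mono_weight m \<beta>"
proof -
  let ?p = "\<lambda>\<gamma> i. pochhammer (- of_int (m i)) (lookup \<gamma> i)"
  have "mono_weight m (\<alpha> + \<beta>) = (\<Prod>i\<in>keys \<alpha> \<union> keys \<beta>. ?p (\<alpha> + \<beta>) i)"
    by (rule mono_weight_superset) (auto simp: keys_add_nat)
  also have "\<dots> = (\<Prod>i\<in>keys \<alpha>. ?p (\<alpha> + \<beta>) i) * (\<Prod>i\<in>keys \<beta>. ?p (\<alpha> + \<beta>) i)"
    using assms by (simp add: prod.union_disjoint)
  also have "(\<Prod>i\<in>keys \<alpha>. ?p (\<alpha> + \<beta>) i) = mono_weight m \<alpha>"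
    unfolding mono_weight_def using assms
    by (intro prod.cong) (auto simp: Poly_Mapping.lookup_add in_keys_iff disjoint_iff)
  also have "(\<Prod>i\<in>keys \<beta>. ?p (\<alpha> + \<beta>) i) = mono_weight m \<beta>"
  proof (unfold mono_weight_def, intro prod.cong refl)
    fix i assume "i \<in> keys \<beta>"
    then have "lookup \<alpha> i = 0" using assms by (auto simp: in_keys_iff)
    then show "?p (\<alpha> + \<beta>) i = ?p \<beta> i" by (simp add: Poly_Mapping.lookup_add)
  qed
  finally show ?thesis .
qed

lemma mono_weight_add_single:
  "mono_weight m (\<alpha> + single i 1) = (of_nat (lookup \<alpha> i) - of_int (m i)) * mono_weight m \<alpha>"
proof -
  let ?p = "\<lambda>\<gamma> j. pochhammer (- of_int (m j)) (lookup \<gamma> j)"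
  let ?S = "insert i (keys \<alpha>)"
  have rest: "(\<Prod>j\<in>keys \<alpha> - {i}. ?p (\<alpha> + single i 1) j) = (\<Prod>j\<in>keys \<alpha> - {i}. ?p \<alpha> j)"
    by (intro prod.cong) (auto simp: Poly_Mapping.lookup_add Poly_Mapping.lookup_single when_def)
  have "mono_weight m (\<alpha> + single i 1) = (\<Prod>j\<in>?S. ?p (\<alpha> + single i 1) j)"
    by (rule mono_weight_superset) (auto simp: keys_add_nat)
  also have "\<dots> = ?p (\<alpha> + single i 1) i * (\<Prod>j\<in>keys \<alpha> - {i}. ?p \<alpha> j)"
    by (simp only: prod.insert_remove finite_keys rest)
  finally have succ: "mono_weight m (\<alpha> + single i 1) = \<dots>" .
  have weight: "mono_weight m \<alpha> = ?p \<alpha> i * (\<Prod>j\<in>keys \<alpha> - {i}. ?p \<alpha> j)"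
    by (subst mono_weight_superset[of ?S]) (auto simp: prod.insert_remove)
  show ?thesis
    unfolding succ weight by (simp add: Poly_Mapping.lookup_add pochhammer_Suc algebra_simps)
qed

lemma mono_weight_sum_add_single:
  assumes "finite I" "keys \<alpha> \<subseteq> I"
  shows "(\<Sum>i\<in>I. mono_weight m (\<alpha> + single i 1)) =
    (of_nat (tdeg \<alpha>) - of_int (\<Sum>i\<in>I. m i)) * (mono_weight m \<alpha> :: 'k::comm_ring_1)"
  unfolding mono_weight_add_single sum_distrib_right[symmetric] sum_subtractf
  using assms by (simp add: tdeg_superset[of I] of_nat_sum)

lemma mono_weight_sum_add_single_gchoose:
  fixes m :: "nat \<Rightarrow> int"
  assumes "finite I" "keys \<alpha> \<subseteq> I"
  defines "x \<equiv> of_int (\<Sum>i\<in>I. m i) - of_nat (tdeg \<alpha>) :: 'k::field_char_0"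
  shows "(\<Sum>i\<in>I. ((x - 1) gchoose s) * mono_weight m (\<alpha> + single i 1)) =
    - (of_nat (Suc s) * (x gchoose Suc s)) * mono_weight m \<alpha>"
proof -
  have "(\<Sum>i\<in>I. ((x - 1) gchoose s) * mono_weight m (\<alpha> + single i 1)) =
      - (x * ((x - 1) gchoose s)) * mono_weight m \<alpha>"
    unfolding sum_distrib_left[symmetric] mono_weight_sum_add_single[OF assms(1,2)] x_def
    by (simp add: algebra_simps)
  also have "\<dots> = - (of_nat (Suc s) * (x gchoose Suc s)) * mono_weight m \<alpha>"
    by (simp only: gbinomial_absorption)
  finally show ?thesis .
qed

definition vars_in :: "nat set \<Rightarrow> 'k::zero mpoly \<Rightarrow> bool" where
  "vars_in I F \<longleftrightarrow> (\<forall>\<alpha>\<in>keys F. keys \<alpha> \<subseteq> I)"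

lemma vars_in_mono: "vars_in I F \<Longrightarrow> I \<subseteq> I' \<Longrightarrow> vars_in I' F"
  by (auto simp: vars_in_def)

lemma vars_in_zero [simp]: "vars_in I 0"
  by (simp add: vars_in_def)

lemma vars_in_one [simp]: "vars_in I (1 :: 'k::comm_ring_1 mpoly)"
  by (simp add: vars_in_def)

lemma vars_in_Cst [simp]: "vars_in I (Cst c)"
  by (simp add: vars_in_def Cst_def)

lemma vars_in_Var: "i \<in> I \<Longrightarrow> vars_in I (Var i :: 'k::comm_ring_1 mpoly)"
  by (simp add: vars_in_def Var_def)

lemma vars_in_add: "vars_in I F \<Longrightarrow> vars_in I G \<Longrightarrow> vars_in I (F + G)"
  unfolding vars_in_def using Poly_Mapping.keys_add[of F G] by blast

lemma vars_in_uminus: "vars_in I F \<Longrightarrow> vars_in I (- F :: 'k::ab_group_add mpoly)"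
  by (simp add: vars_in_def)

lemma vars_in_mult:
  "vars_in I F \<Longrightarrow> vars_in I G \<Longrightarrow> vars_in I (F * G :: 'k::comm_ring_1 mpoly)"
  unfolding vars_in_def using Poly_Mapping.keys_mult[of F G] by (fastforce simp: keys_add_nat)

lemma vars_in_power: "vars_in I F \<Longrightarrow> vars_in I (F ^ s :: 'k::comm_ring_1 mpoly)"
  by (induction s) (auto simp: vars_in_mult)

lemma vars_in_DeltaD: "vars_in I (DeltaD I :: 'k::comm_ring_1 mpoly)"
proof -
  have "vars_in I (\<Sum>i\<in>A. Var i :: 'k mpoly)" if "A \<subseteq> I" for A
    using that by (induction A rule: infinite_finite_induct) (auto intro: vars_in_add vars_in_Var)
  then show ?thesis
    by (simp add: DeltaD_def)
qed

text \<open>Multiplying the tensor factors out, \<open>(t^(m 0) \<otimes> ... \<otimes> t^(m (n-1))) F\<close> becomes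
  \<open>\<Sum>j. spec_coeff m F j * t^(M - j)\<close>, where \<open>M\<close> is the sum of the \<open>m i\<close> over the
  variables of \<open>F\<close>.\<close>
definition spec_coeff :: "(nat \<Rightarrow> int) \<Rightarrow> 'k::comm_ring_1 mpoly \<Rightarrow> int \<Rightarrow> 'k" where
  "spec_coeff m F j = lin_ext (\<lambda>\<alpha>. if int (tdeg \<alpha>) = j then mono_weight m \<alpha> else 0) F"

lemma spec_coeff_one: "spec_coeff m 1 j = (if j = 0 then 1 else 0)"
  by (simp add: spec_coeff_def)

lemma spec_coeff_Cst_mult: "spec_coeff m (Cst c * F) j = c * spec_coeff m F j"
  by (simp add: spec_coeff_def lin_ext_Cst_mult)

lemma spec_coeff_mult:
  assumes "vars_in I F" "vars_in I' G" "I \<inter> I' = {}"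
  shows "spec_coeff m (F * G) j =
    (\<Sum>\<beta>\<in>keys G. lookup G \<beta> * mono_weight m \<beta> * spec_coeff m F (j - int (tdeg \<beta>)))"
proof -
  have "spec_coeff m (F * G) j = (\<Sum>\<alpha>\<in>keys F. \<Sum>\<beta>\<in>keys G. lookup F \<alpha> * lookup G \<beta> *
      (if int (tdeg \<alpha>) = j - int (tdeg \<beta>) then mono_weight m \<alpha> else 0) * mono_weight m \<beta>)"
    unfolding spec_coeff_def lin_ext_mult
  proof (intro sum.cong refl)
    fix \<alpha> \<beta> assume "\<alpha> \<in> keys F" "\<beta> \<in> keys G"
    then have "keys \<alpha> \<inter> keys \<beta> = {}"
      using assms unfolding vars_in_def by blast
    then show "lookup F \<alpha> * lookup G \<beta> *
        (if int (tdeg (\<alpha> + \<beta>)) = j then mono_weight m (\<alpha> + \<beta>) else 0) =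
      lookup F \<alpha> * lookup G \<beta> *
        (if int (tdeg \<alpha>) = j - int (tdeg \<beta>) then mono_weight m \<alpha> else 0) * mono_weight m \<beta>"
      by (auto simp: tdeg_add mono_weight_add)
  qed
  also have "\<dots> = (\<Sum>\<beta>\<in>keys G. lookup G \<beta> * mono_weight m \<beta> * spec_coeff m F (j - int (tdeg \<beta>)))"
    by (subst sum.swap)
      (simp add: spec_coeff_def lin_ext_def sum_distrib_left sum_distrib_right algebra_simps)
  finally show ?thesis .
qed

text \<open>Each factor \<open>-\<Delta>(D)\<close> raises the degree by one and contributes the factor
  \<open>M - degree\<close>, so \<open>s\<close> factors produce a falling factorial.\<close>
lemma spec_coeff_mult_power_DeltaD:
  fixes F :: "'k::field_char_0 mpoly"
  assumes "finite I" "vars_in I F"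
  shows "spec_coeff m (F * (- DeltaD I) ^ s) j =
    fact s * lin_ext (\<lambda>\<alpha>. if int (tdeg \<alpha>) + int s = j
      then ((of_int (\<Sum>i\<in>I. m i) - of_nat (tdeg \<alpha>)) gchoose s) * mono_weight m \<alpha> else 0) F"
  using assms(2)
proof (induction s arbitrary: F)
  case 0
  show ?case
    unfolding spec_coeff_def by (auto intro: lin_ext_cong)
next
  case (Suc s)
  define g where "g s \<alpha> = (if int (tdeg \<alpha>) + int s = j
    then ((of_int (\<Sum>i\<in>I. m i) - of_nat (tdeg \<alpha>)) gchoose s) * mono_weight m \<alpha> else 0 :: 'k)"
    for s \<alpha>
  have "vars_in I (F * - DeltaD I)"
    by (intro vars_in_mult vars_in_uminus vars_in_DeltaD Suc.prems)
  moreover have "F * (- DeltaD I) ^ Suc s = (F * - DeltaD I) * (- DeltaD I) ^ s"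
    by (simp add: algebra_simps)
  ultimately have "spec_coeff m (F * (- DeltaD I) ^ Suc s) j = fact s * lin_ext (g s) (F * - DeltaD I)"
    using Suc.IH unfolding g_def by presburger
  also have "\<dots> = - fact s * lin_ext (\<lambda>\<alpha>. \<Sum>i\<in>I. g s (\<alpha> + single i 1)) F"
    by (simp add: lin_ext_uminus lin_ext_mult_DeltaD)
  also have "lin_ext (\<lambda>\<alpha>. \<Sum>i\<in>I. g s (\<alpha> + single i 1)) F = lin_ext (\<lambda>\<alpha>. - of_nat (Suc s) * g (Suc s) \<alpha>) F"
  proof (rule lin_ext_cong)
    fix \<alpha> assume "\<alpha> \<in> keys F"
    then have "keys \<alpha> \<subseteq> I"
      using Suc.prems by (auto simp: vars_in_def)
    have "(\<Sum>i\<in>I. g s (\<alpha> + single i 1)) = (if int (tdeg \<alpha>) + int (Suc s) = j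
        then \<Sum>i\<in>I. ((of_int (\<Sum>i\<in>I. m i) - of_nat (tdeg \<alpha>) - 1) gchoose s) *
          mono_weight m (\<alpha> + single i 1)
        else 0)"
      by (cases "int (tdeg \<alpha>) + int (Suc s) = j") (auto simp: g_def tdeg_add diff_diff_eq add.commute)
    also have "\<dots> = - of_nat (Suc s) * g (Suc s) \<alpha>"
      unfolding mono_weight_sum_add_single_gchoose[OF assms(1) \<open>keys \<alpha> \<subseteq> I\<close>]
      by (simp add: g_def algebra_simps)
    finally show "(\<Sum>i\<in>I. g s (\<alpha> + single i 1)) = - of_nat (Suc s) * g (Suc s) \<alpha>" .
  qed
  finally show ?case
    by (simp add: lin_ext_def sum_distrib_left g_def algebra_simps)
qed

lemma spec_coeff_mult_DeltaD:
  fixes F :: "'k::field_char_0 mpoly"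
  assumes "finite I" "vars_in I F"
  shows "spec_coeff m (F * DeltaD I) j =
    (of_int (j - 1) - of_int (\<Sum>i\<in>I. m i)) * spec_coeff m F (j - 1)"
proof -
  have "spec_coeff m (F * DeltaD I) j = - spec_coeff m (F * (- DeltaD I) ^ 1) j"
    by (simp add: spec_coeff_def lin_ext_uminus)
  also have "\<dots> = - lin_ext (\<lambda>\<alpha>. if int (tdeg \<alpha>) + 1 = j
      then (of_int (\<Sum>i\<in>I. m i) - of_nat (tdeg \<alpha>)) * mono_weight m \<alpha> else 0) F"
    using spec_coeff_mult_power_DeltaD[OF assms, of m 1 j]
    by (simp add: spec_coeff_def lin_ext_uminus cong: if_cong)
  also have "\<dots> = (of_int (j - 1) - of_int (\<Sum>i\<in>I. m i)) * spec_coeff m F (j - 1)"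
    unfolding spec_coeff_def lin_ext_def sum_distrib_left sum_negf[symmetric]
    by (intro sum.cong refl) (auto simp: algebra_simps)
  finally show ?thesis .
qed

lemma spec_coeff_epp_term:
  fixes F G :: "'k::field_char_0 mpoly"
  assumes "finite I" "vars_in I F" "vars_in I' G" "I \<inter> I' = {}"
  shows "spec_coeff m (F * G * Cst (1 / fact s) * (- DeltaD I) ^ s) j =
    (\<Sum>\<alpha>\<in>keys F. \<Sum>\<beta>\<in>keys G. if int (tdeg \<alpha>) + int (tdeg \<beta>) + int s = j
      then ((of_int (\<Sum>i\<in>I. m i) - of_nat (tdeg \<alpha>)) gchoose s) *
        (lookup F \<alpha> * mono_weight m \<alpha> * (lookup G \<beta> * mono_weight m \<beta>))
      else 0)"
proof -
  have "F * G * Cst (1 / fact s) * (- DeltaD I) ^ s = Cst (1 / fact s) * ((F * (- DeltaD I) ^ s) * G)"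
    by (simp add: algebra_simps)
  moreover have "vars_in I (F * (- DeltaD I) ^ s)"
    by (intro vars_in_mult vars_in_power vars_in_uminus vars_in_DeltaD assms)
  ultimately have "spec_coeff m (F * G * Cst (1 / fact s) * (- DeltaD I) ^ s) j =
    1 / fact s * (\<Sum>\<beta>\<in>keys G. lookup G \<beta> * mono_weight m \<beta> *
      spec_coeff m (F * (- DeltaD I) ^ s) (j - int (tdeg \<beta>)))"
    by (simp only: spec_coeff_Cst_mult spec_coeff_mult[OF _ assms(3,4)])
  then show ?thesis
    unfolding spec_coeff_mult_power_DeltaD[OF assms(1,2)] lin_ext_def
    by (subst sum.swap) (auto simp: sum_distrib_left intro!: sum.cong simp: algebra_simps)
qed

lemma pstar_vars_in:
  "\<forall>x\<in>set (pstar cp off t bs :: ('k::field_char_0 mpoly \<times> 'c::zero) list).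
     vars_in {off..<off + nleaves t} (fst x)"
proof (induction t arbitrary: off bs)
  case Lf
  then show ?case
    by simp
next
  case (Nd l r)
  let ?I = "{off..<off + nleaves (Nd l r)}"
  have "vars_in ?I (F * G * Cst (1 / fact s) * (- DeltaD {off..<off + nleaves l}) ^ s)"
    if "(F, c) \<in> set (pstar cp off l (take (nleaves l) bs) :: ('k mpoly \<times> 'c) list)"
      "(G, d) \<in> set (pstar cp (off + nleaves l) r (drop (nleaves l) bs) :: ('k mpoly \<times> 'c) list)"
    for F G c d s
  proof -
    have "vars_in ?I F"
      using Nd.IH(1)[of off "take (nleaves l) bs"] that(1) by (force intro: vars_in_mono)
    moreover have "vars_in ?I G"
      using Nd.IH(2)[of "off + nleaves l" "drop (nleaves l) bs"] that(2) by (force intro: vars_in_mono)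
    moreover have "vars_in ?I (DeltaD {off..<off + nleaves l} :: 'k mpoly)"
      by (rule vars_in_mono[OF vars_in_DeltaD]) auto
    ultimately show ?thesis
      by (intro vars_in_mult vars_in_power vars_in_uminus vars_in_Cst)
  qed
  then show ?case
    by (fastforce simp: epp_def)
qed

context
  fixes \<sigma> :: "nat \<Rightarrow> nat"
  assumes bij: "bij \<sigma>"
begin

lemma map_key_map_key_inv: "Poly_Mapping.map_key \<sigma> (Poly_Mapping.map_key (inv \<sigma>) \<alpha>) = (\<alpha> :: nat \<Rightarrow>\<^sub>0 nat)"
  using bij by (simp add: map_key_compose bij_is_inj bij_imp_bij_inv comp_def map_key_id)

lemma map_key_inv_map_key: "Poly_Mapping.map_key (inv \<sigma>) (Poly_Mapping.map_key \<sigma> \<alpha>) = (\<alpha> :: nat \<Rightarrow>\<^sub>0 nat)"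
  using bij
  by (simp add: map_key_compose bij_is_inj bij_imp_bij_inv comp_def map_key_id
      surj_f_inv_f[OF bij_is_surj])

lemma lookup_map_key_inv: "lookup (Poly_Mapping.map_key (inv \<sigma>) \<alpha>) = lookup (\<alpha> :: nat \<Rightarrow>\<^sub>0 nat) \<circ> inv \<sigma>"
  using bij by (simp add: map_key.rep_eq bij_imp_bij_inv bij_is_inj)

lemma keys_map_key_inv: "keys (Poly_Mapping.map_key (inv \<sigma>) \<alpha>) = \<sigma> ` keys (\<alpha> :: nat \<Rightarrow>\<^sub>0 nat)"
  using bij by (simp add: keys_map_key bij_imp_bij_inv bij_is_inj bij_vimage_eq_inv_image inv_inv_eq)

lemma tdeg_map_key_inv: "tdeg (Poly_Mapping.map_key (inv \<sigma>) \<alpha>) = tdeg \<alpha>"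
  using bij unfolding tdeg_def keys_map_key_inv lookup_map_key_inv
  by (simp add: sum.reindex inj_on_subset[OF bij_is_inj] bij_is_inj)

lemma mono_weight_map_key_inv: "mono_weight m (Poly_Mapping.map_key (inv \<sigma>) \<alpha>) = mono_weight (m \<circ> \<sigma>) \<alpha>"
  using bij unfolding mono_weight_def keys_map_key_inv lookup_map_key_inv
  by (simp add: prod.reindex inj_on_subset[OF bij_is_inj] bij_is_inj)

end

section \<open>The coefficient algebra\<close>

lemma canonC_Cons: "canonC ((q, b) # X) k = (if q = k then b else 0) + canonC X k"
  by (simp add: canonC_def)

lemma canonC_append: "canonC (X @ Y) k = canonC X k + canonC Y k"
  by (simp add: canonC_def)

lemma sum_list_additive_canonC:
  fixes G :: "int \<Rightarrow> 'c::ab_group_add \<Rightarrow> 'v::ab_group_add"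
  assumes add: "\<And>p a b. G p (a + b) = G p a + G p b"
    and "finite P" "fst ` set X \<subseteq> P"
  shows "sum_list (map (\<lambda>(p, a). G p a) X) = (\<Sum>p\<in>P. G p (canonC X p))"
proof -
  have zero: "G p 0 = 0" for p
    using add[of p 0 0] by simp
  show ?thesis
    using assms(3)
  proof (induction X)
    case Nil
    then show ?case
      by (simp add: canonC_def zero)
  next
    case (Cons x X)
    obtain q b where x: "x = (q, b)"
      by force
    have "(\<Sum>p\<in>P. G p (if q = p then b else 0)) = G q b"
      using Cons.prems \<open>finite P\<close> by (simp add: x zero if_distrib[of "G _"] cong: if_cong)
    then show ?case
      using Cons by (simp add: x canonC_Cons add sum.distrib)
  qed
qed

lemma crel_sum:
  "finite A \<Longrightarrow> (\<And>j. j \<in> A \<Longrightarrow> f j \<in> crel sm D) \<Longrightarrow> (\<lambda>k. \<Sum>j\<in>A. f j k) \<in> crel sm D"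
proof (induction A rule: finite_induct)
  case empty
  then show ?case
    using crel_zero by simp
next
  case (insert x F)
  then have "(\<lambda>k. \<Sum>j\<in>insert x F. f j k) = f x + (\<lambda>k. \<Sum>j\<in>F. f j k)"
    by (auto simp: fun_eq_iff)
  then show ?case
    using insert by (auto intro: crel_add)
qed

locale conformal_alg =
  fixes sm :: "'k::field_char_0 \<Rightarrow> 'c::ab_group_add \<Rightarrow> 'c"
    and D :: "'c \<Rightarrow> 'c"
    and cp :: "nat \<Rightarrow> 'c \<Rightarrow> 'c \<Rightarrow> 'c"
  assumes conformal: "conformal_algebra sm D cp"
begin

sublocale vector_space sm
  using conformal by (simp add: conformal_algebra_def)

lemma cp_add_left: "cp n (x + y) b = cp n x b + cp n y b"
  using conformal by (simp add: conformal_algebra_def)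

lemma cp_add_right: "cp n a (x + y) = cp n a x + cp n a y"
  using conformal by (simp add: conformal_algebra_def)

lemma cp_scale_left: "cp n (sm k a) b = sm k (cp n a b)"
  using conformal by (simp add: conformal_algebra_def)

lemma cp_scale_right: "cp n a (sm k b) = sm k (cp n a b)"
  using conformal by (simp add: conformal_algebra_def)

lemma cp_locality: "\<exists>N. \<forall>n\<ge>N. cp n a b = 0"
  using conformal by (simp add: conformal_algebra_def)

lemma cp_beyond_lbound: "lbound cp a b \<le> s \<Longrightarrow> cp s a b = 0"
  unfolding lbound_def using LeastI_ex[OF cp_locality[of a b]] by blast

lemma lbound_le: "\<forall>s\<ge>N. cp s a b = 0 \<Longrightarrow> lbound cp a b \<le> N"
  unfolding lbound_def by (rule Least_le) simp

definition mul_coeff :: "int \<Rightarrow> 'c \<Rightarrow> int \<Rightarrow> 'c \<Rightarrow> int \<Rightarrow> 'c" where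
  "mul_coeff p a q b k = (\<Sum>s<lbound cp a b.
     if p + q - int s = k then sm ((of_int p :: 'k) gchoose s) (cp s a b) else 0)"

lemma mul_coeff_bound:
  assumes "\<forall>s\<ge>N. cp s a b = 0"
  shows "mul_coeff p a q b k =
    (\<Sum>s<N. if p + q - int s = k then sm ((of_int p :: 'k) gchoose s) (cp s a b) else 0)"
  unfolding mul_coeff_def
  using lbound_le[OF assms] cp_beyond_lbound by (intro sum.mono_neutral_left) auto

lemma mul_coeff_add_left: "mul_coeff p (a1 + a2) q b k = mul_coeff p a1 q b k + mul_coeff p a2 q b k"
proof -
  define N where "N = max (lbound cp a1 b) (lbound cp a2 b)"
  have z: "\<forall>s\<ge>N. cp s a1 b = 0" "\<forall>s\<ge>N. cp s a2 b = 0" "\<forall>s\<ge>N. cp s (a1 + a2) b = 0"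
    by (auto simp: N_def cp_beyond_lbound cp_add_left)
  show ?thesis
    unfolding mul_coeff_bound[OF z(1)] mul_coeff_bound[OF z(2)] mul_coeff_bound[OF z(3)]
    by (simp add: cp_add_left scale_right_distrib sum.distrib[symmetric]
        if_distrib cong: if_cong)
qed

lemma mul_coeff_add_right: "mul_coeff p a q (b1 + b2) k = mul_coeff p a q b1 k + mul_coeff p a q b2 k"
proof -
  define N where "N = max (lbound cp a b1) (lbound cp a b2)"
  have z: "\<forall>s\<ge>N. cp s a b1 = 0" "\<forall>s\<ge>N. cp s a b2 = 0" "\<forall>s\<ge>N. cp s a (b1 + b2) = 0"
    by (auto simp: N_def cp_beyond_lbound cp_add_right)
  show ?thesis
    unfolding mul_coeff_bound[OF z(1)] mul_coeff_bound[OF z(2)] mul_coeff_bound[OF z(3)]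
    by (simp add: cp_add_right scale_right_distrib sum.distrib[symmetric]
        if_distrib cong: if_cong)
qed

lemma mul_coeff_zero_left [simp]: "mul_coeff p 0 q b k = 0"
  using mul_coeff_add_left[of p 0 0 q b k] by simp

lemma mul_coeff_zero_right [simp]: "mul_coeff p a q 0 k = 0"
  using mul_coeff_add_right[of p a q 0 0 k] by simp

lemma mul_coeff_scale:
  "mul_coeff p (sm x a) q (sm y b) k = (\<Sum>s<lbound cp a b.
     if p + q - int s = k then sm (((of_int p :: 'k) gchoose s) * (x * y)) (cp s a b) else 0)"
proof -
  have vanish: "\<forall>s\<ge>lbound cp a b. cp s (sm x a) (sm y b) = 0"
    by (simp add: cp_scale_left cp_scale_right cp_beyond_lbound)
  show ?thesis
    unfolding mul_coeff_bound[OF vanish]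
    by (intro sum.cong refl) (simp add: cp_scale_left cp_scale_right mult.assoc)
qed

lemma canonC_cmul_sum_list:
  "canonC (cmul sm cp X Y) k =
     sum_list (map (\<lambda>(p, a). sum_list (map (\<lambda>(q, b). mul_coeff p a q b k) Y)) X)"
proof (induction X)
  case Nil
  then show ?case
    by (simp add: cmul_def canonC_def)
next
  case (Cons x X)
  obtain p a where x: "x = (p, a)"
    by force
  have "canonC (map (\<lambda>s. (p + q - int s, sm ((of_int p :: 'k) gchoose s) (cp s a b)))
      [0..<lbound cp a b]) k = mul_coeff p a q b k" for q b
    unfolding mul_coeff_def canonC_def
    by (simp add: comp_def sum_list_sum_nth atLeast0LessThan) (rule sum.cong, auto)
  then have "canonC (concat (map (\<lambda>(q, b). map (\<lambda>s. (p + q - int s,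
      sm ((of_int p :: 'k) gchoose s) (cp s a b))) [0..<lbound cp a b]) Y)) k =
    sum_list (map (\<lambda>(q, b). mul_coeff p a q b k) Y)"
    by (induction Y) (auto simp: canonC_append canonC_def[of "[]"])
  then show ?case
    using Cons by (simp add: x cmul_def canonC_append)
qed

lemma canonC_cmul:
  assumes "finite P" "fst ` set X \<subseteq> P" "finite Q" "fst ` set Y \<subseteq> Q"
  shows "canonC (cmul sm cp X Y) k = (\<Sum>p\<in>P. \<Sum>q\<in>Q. mul_coeff p (canonC X p) q (canonC Y q) k)"
proof -
  have "sum_list (map (\<lambda>(q, b). mul_coeff p a q b k) Y) = (\<Sum>q\<in>Q. mul_coeff p a q (canonC Y q) k)"
    for p a
    by (rule sum_list_additive_canonC[OF _ assms(3,4)]) (rule mul_coeff_add_right)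
  then have "canonC (cmul sm cp X Y) k =
      sum_list (map (\<lambda>(p, a). \<Sum>q\<in>Q. mul_coeff p a q (canonC Y q) k) X)"
    by (simp add: canonC_cmul_sum_list)
  also have "\<dots> = (\<Sum>p\<in>P. \<Sum>q\<in>Q. mul_coeff p (canonC X p) q (canonC Y q) k)"
    by (rule sum_list_additive_canonC[OF _ assms(1,2)]) (simp add: mul_coeff_add_left sum.distrib)
  finally show ?thesis .
qed

lemma canonC_cmul_cong:
  assumes "canonC X = canonC X'" "canonC Y = canonC Y'"
  shows "canonC (cmul sm cp X Y) = canonC (cmul sm cp X' Y')"
proof
  fix k
  let ?P = "fst ` set X \<union> fst ` set X'" and ?Q = "fst ` set Y \<union> fst ` set Y'"
  show "canonC (cmul sm cp X Y) k = canonC (cmul sm cp X' Y') k"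
    using canonC_cmul[of ?P X ?Q Y k] canonC_cmul[of ?P X' ?Q Y' k] assms by simp
qed

lemma canonC_cmul_add_left:
  assumes "\<And>k. canonC X k = canonC X1 k + canonC X2 k"
  shows "canonC (cmul sm cp X Y) k = canonC (cmul sm cp X1 Y) k + canonC (cmul sm cp X2 Y) k"
proof -
  let ?P = "fst ` set X \<union> fst ` set X1 \<union> fst ` set X2" and ?Q = "fst ` set Y"
  have "canonC (cmul sm cp Z Y) k = (\<Sum>p\<in>?P. \<Sum>q\<in>?Q. mul_coeff p (canonC Z p) q (canonC Y q) k)"
    if "Z \<in> {X, X1, X2}" for Z
    using that by (intro canonC_cmul) auto
  then show ?thesis
    by (simp add: assms mul_coeff_add_left sum.distrib)
qed

lemma canonC_cmul_add_right:
  assumes "\<And>k. canonC Y k = canonC Y1 k + canonC Y2 k"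
  shows "canonC (cmul sm cp X Y) k = canonC (cmul sm cp X Y1) k + canonC (cmul sm cp X Y2) k"
proof -
  let ?Q = "fst ` set Y \<union> fst ` set Y1 \<union> fst ` set Y2" and ?P = "fst ` set X"
  have "canonC (cmul sm cp X Z) k = (\<Sum>p\<in>?P. \<Sum>q\<in>?Q. mul_coeff p (canonC X p) q (canonC Z q) k)"
    if "Z \<in> {Y, Y1, Y2}" for Z
    using that by (intro canonC_cmul) auto
  then show ?thesis
    by (simp add: assms mul_coeff_add_right sum.distrib)
qed

lemma canonC_cmul_zero_left:
  "(\<And>k. canonC X k = 0) \<Longrightarrow> canonC (cmul sm cp X Y) k = 0"
  using canonC_cmul[of "fst ` set X" X "fst ` set Y" Y k] by simp

lemma canonC_cmul_zero_right:
  "(\<And>k. canonC Y k = 0) \<Longrightarrow> canonC (cmul sm cp X Y) k = 0"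
  using canonC_cmul[of "fst ` set X" X "fst ` set Y" Y k] by simp

lemma canonC_evalC_update_append:
  "length xs = nleaves t \<Longrightarrow> j < nleaves t \<Longrightarrow>
   canonC (evalC sm cp t (xs[j := X1 @ X2])) k =
     canonC (evalC sm cp t (xs[j := X1])) k + canonC (evalC sm cp t (xs[j := X2])) k"
proof (induction t arbitrary: xs j k)
  case Lf
  then show ?case
    by (cases xs) (auto simp: canonC_append)
next
  case (Nd l r)
  show ?case
  proof (cases "j < nleaves l")
    case True
    then show ?thesis
      using Nd by (simp add: take_update_swap canonC_cmul_add_left)
  next
    case False
    then show ?thesis
      using Nd by (simp add: drop_update_swap canonC_cmul_add_right)
  qed
qed

lemma canonC_evalC_update_Nil:
  "length xs = nleaves t \<Longrightarrow> j < nleaves t \<Longrightarrow> canonC (evalC sm cp t (xs[j := []])) k = 0"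
proof (induction t arbitrary: xs j k)
  case Lf
  then show ?case
    by (cases xs) (auto simp: canonC_def)
next
  case (Nd l r)
  show ?case
  proof (cases "j < nleaves l")
    case True
    then show ?thesis
      using Nd by (simp add: take_update_swap canonC_cmul_zero_left)
  next
    case False
    then show ?thesis
      using Nd by (simp add: drop_update_swap canonC_cmul_zero_right)
  qed
qed

lemma fcoeff_update_append:
  assumes "i < n"
  shows "fcoeff sm cp n coef (x(i := X1 @ X2)) =
    fcoeff sm cp n coef (x(i := X1)) + fcoeff sm cp n coef (x(i := X2))"
proof
  fix k
  have "canonC (evalC sm cp t (map (\<lambda>l. (x(i := X1 @ X2)) (\<sigma> l)) [0..<n])) k =
      canonC (evalC sm cp t (map (\<lambda>l. (x(i := X1)) (\<sigma> l)) [0..<n])) k +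
      canonC (evalC sm cp t (map (\<lambda>l. (x(i := X2)) (\<sigma> l)) [0..<n])) k"
    if "\<sigma> permutes {..<n}" "nleaves t = n" for \<sigma> t
    unfolding map_permuted_fun_upd[OF that(1) assms]
    using that permutes_inv_less[OF that(1) assms] by (simp add: canonC_evalC_update_append)
  then show "fcoeff sm cp n coef (x(i := X1 @ X2)) k =
      (fcoeff sm cp n coef (x(i := X1)) + fcoeff sm cp n coef (x(i := X2))) k"
    unfolding fcoeff_def plus_fun_def sum_fun_apply sum.distrib[symmetric]
    by (intro sum.cong refl) (simp add: scale_right_distrib)
qed

lemma fcoeff_Nil_arg:
  assumes "i < n" "x i = []"
  shows "fcoeff sm cp n coef x = (\<lambda>_. 0)"
proof
  fix k
  have "canonC (evalC sm cp t (map (\<lambda>l. x (\<sigma> l)) [0..<n])) k = 0"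
    if "\<sigma> permutes {..<n}" "nleaves t = n" for \<sigma> t
  proof -
    have "map (\<lambda>l. x (\<sigma> l)) [0..<n] = (map (\<lambda>l. x (\<sigma> l)) [0..<n])[inv \<sigma> i := []]"
      using map_permuted_fun_upd[OF that(1) assms(1), of x "[]"] assms(2) by (simp add: fun_upd_idem)
    moreover have "inv \<sigma> i < nleaves t"
      using permutes_inv_less[OF that(1) assms(1)] that(2) by simp
    ultimately show ?thesis
      using canonC_evalC_update_Nil[of "map (\<lambda>l. x (\<sigma> l)) [0..<n]" t "inv \<sigma> i"] that(2)
      by simp
  qed
  then show "fcoeff sm cp n coef x k = 0"
    unfolding fcoeff_def sum_fun_apply by (intro sum.neutral ballI) auto
qed

lemma fcoeff_in_crel_if_singletons:
  assumes singletons: "\<And>y. \<forall>i<n. length (y i) = 1 \<Longrightarrow> fcoeff sm cp n coef y \<in> crel sm D"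
  shows "fcoeff sm cp n coef x \<in> crel sm D"
proof (induction "\<Sum>l<n. length (x l)" arbitrary: x rule: less_induct)
  case less
  show ?case
  proof (cases "\<forall>i<n. length (x i) = 1")
    case True
    then show ?thesis
      by (rule singletons)
  next
    case False
    then obtain i where i: "i < n" "length (x i) \<noteq> 1"
      by blast
    have shorter: "fcoeff sm cp n coef (x(i := Z)) \<in> crel sm D" if "length Z < length (x i)" for Z
      by (rule less) (rule sum_strict_mono_ex1, use i that in auto)
    show ?thesis
    proof (cases "x i")
      case Nil
      then show ?thesis
        using fcoeff_Nil_arg[OF i(1)] crel_zero by simp
    next
      case (Cons h tl)
      then have "x = x(i := [h] @ tl)" "tl \<noteq> []"
        using i by auto
      then have "fcoeff sm cp n coef x = fcoeff sm cp n coef (x(i := [h])) + fcoeff sm cp n coef (x(i := tl))"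
        using fcoeff_update_append[OF i(1)] by metis
      then show ?thesis
        using shorter[of "[h]"] shorter[of tl] \<open>tl \<noteq> []\<close> Cons by (simp add: crel_add)
    qed
  qed
qed

section \<open>Specialisation at fixed exponents\<close>

text \<open>The specialisation at exponents \<open>m\<close>: the coefficient of \<open>t^k\<close> in the image of
  \<open>X \<in> H^(\<otimes>n) \<otimes> C\<close> under \<open>F \<otimes> c \<mapsto> (t^(m 0) \<otimes> ...) F \<otimes>\<^sub>H c\<close> in \<open>Coeff C\<close>, where
  \<open>M\<close> is the sum of the exponents of the tensor factors involved.\<close>
definition spec :: "(nat \<Rightarrow> int) \<Rightarrow> int \<Rightarrow> ('k mpoly \<times> 'c) list \<Rightarrow> int \<Rightarrow> 'c" where
  "spec m M X k = sum_list (map (\<lambda>(F, c). sm (spec_coeff m F (M - k)) c) X)"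

definition spec_terms :: "(nat \<Rightarrow> int) \<Rightarrow> int \<Rightarrow> 'k mpoly \<Rightarrow> 'c \<Rightarrow> (int \<times> 'c) list" where
  "spec_terms m M F c = map (\<lambda>\<alpha>. (M - int (tdeg \<alpha>), sm (lookup F \<alpha> * mono_weight m \<alpha>) c))
     (sorted_list_of_set (keys F))"

definition spec_list :: "(nat \<Rightarrow> int) \<Rightarrow> int \<Rightarrow> ('k mpoly \<times> 'c) list \<Rightarrow> (int \<times> 'c) list" where
  "spec_list m M X = concat (map (\<lambda>(F, c). spec_terms m M F c) X)"

lemma spec_append: "spec m M (X @ Y) k = spec m M X k + spec m M Y k"
  by (simp add: spec_def)

lemma spec_concat: "spec m M (concat XS) k = sum_list (map (\<lambda>X. spec m M X k) XS)"
  by (induction XS) (auto simp: spec_append, simp add: spec_def)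

lemma canonC_spec_terms: "canonC (spec_terms m M F c) k = sm (spec_coeff m F (M - k)) c"
proof -
  have "canonC (spec_terms m M F c) k =
      (\<Sum>\<alpha>\<in>keys F. if M - int (tdeg \<alpha>) = k then sm (lookup F \<alpha> * mono_weight m \<alpha>) c else 0)"
    unfolding spec_terms_def canonC_def by (simp add: comp_def sum_list_distinct_conv_sum_set)
  also have "\<dots> = sm (\<Sum>\<alpha>\<in>keys F. lookup F \<alpha> *
      (if int (tdeg \<alpha>) = M - k then mono_weight m \<alpha> else 0)) c"
    by (simp add: scale_sum_left) (rule sum.cong, auto)
  finally show ?thesis
    by (simp add: spec_coeff_def lin_ext_def)
qed

lemma canonC_spec_list: "canonC (spec_list m M X) k = spec m M X k"
  by (induction X) (auto simp: spec_list_def spec_def canonC_append canonC_spec_terms,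
      simp add: canonC_def)

lemma canonC_cmul_spec_terms:
  assumes "finite I" "vars_in I F" "vars_in I' G" "I \<inter> I' = {}"
  shows "canonC (cmul sm cp (spec_terms m (\<Sum>i\<in>I. m i) F c) (spec_terms m M' G d)) k =
    spec m ((\<Sum>i\<in>I. m i) + M')
      (map (\<lambda>s. (F * G * Cst (1 / fact s) * (- DeltaD I) ^ s, cp s c d)) [0..<lbound cp c d]) k"
proof -
  let ?M = "\<Sum>i\<in>I. m i"
  let ?coeff = "\<lambda>s \<alpha> \<beta>. ((of_int ?M - of_nat (tdeg \<alpha>)) gchoose s) *
    (lookup F \<alpha> * mono_weight m \<alpha> * (lookup G \<beta> * mono_weight m \<beta>))"
  have "canonC (cmul sm cp (spec_terms m ?M F c) (spec_terms m M' G d)) k =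
    (\<Sum>\<alpha>\<in>keys F. \<Sum>\<beta>\<in>keys G. mul_coeff (?M - int (tdeg \<alpha>)) (sm (lookup F \<alpha> * mono_weight m \<alpha>) c)
      (M' - int (tdeg \<beta>)) (sm (lookup G \<beta> * mono_weight m \<beta>) d) k)"
    unfolding canonC_cmul_sum_list spec_terms_def by (simp add: comp_def sum_list_distinct_conv_sum_set)
  also have "\<dots> = (\<Sum>\<alpha>\<in>keys F. \<Sum>\<beta>\<in>keys G. \<Sum>s<lbound cp c d.
      sm (if int (tdeg \<alpha>) + int (tdeg \<beta>) + int s = ?M + M' - k then ?coeff s \<alpha> \<beta> else 0) (cp s c d))"
    unfolding mul_coeff_scale by (intro sum.cong refl) auto
  also have "\<dots> = (\<Sum>s<lbound cp c d. sm (\<Sum>\<alpha>\<in>keys F. \<Sum>\<beta>\<in>keys G.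
      if int (tdeg \<alpha>) + int (tdeg \<beta>) + int s = ?M + M' - k then ?coeff s \<alpha> \<beta> else 0) (cp s c d))"
    by (simp add: scale_sum_left sum.swap[of _ "{..<lbound cp c d}"])
  also have "\<dots> = spec m (?M + M')
      (map (\<lambda>s. (F * G * Cst (1 / fact s) * (- DeltaD I) ^ s, cp s c d)) [0..<lbound cp c d]) k"
    by (simp add: spec_def comp_def interv_sum_list_conv_sum_set_nat atLeast0LessThan
        spec_coeff_epp_term[OF assms])
  finally show ?thesis .
qed

lemma canonC_cmul_concat:
  "canonC (cmul sm cp (concat XS) (concat YS)) k =
    sum_list (map (\<lambda>X. sum_list (map (\<lambda>Y. canonC (cmul sm cp X Y) k) YS)) XS)"
  unfolding canonC_cmul_sum_list sum_list_map_concat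
  by (simp add: split_def) (intro arg_cong[where f = sum_list] map_cong refl sum_list_map_swap)

lemma canonC_cmul_spec_list:
  assumes "finite I" "\<forall>x\<in>set X. vars_in I (fst x)" "\<forall>y\<in>set Y. vars_in I' (fst y)" "I \<inter> I' = {}"
  shows "canonC (cmul sm cp (spec_list m (\<Sum>i\<in>I. m i) X) (spec_list m M' Y)) k =
    spec m ((\<Sum>i\<in>I. m i) + M') (epp cp I X Y) k"
proof -
  have "canonC (cmul sm cp (spec_terms m (\<Sum>i\<in>I. m i) F c) (spec_terms m M' G d)) k =
      spec m ((\<Sum>i\<in>I. m i) + M')
        (map (\<lambda>s. (F * G * Cst (1 / fact s) * (- DeltaD I) ^ s, cp s c d)) [0..<lbound cp c d]) k"
    if "(F, c) \<in> set X" "(G, d) \<in> set Y" for F c G d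
    using assms that by (intro canonC_cmul_spec_terms) auto
  then have "canonC (cmul sm cp (spec_list m (\<Sum>i\<in>I. m i) X) (spec_list m M' Y)) k =
      sum_list (map (\<lambda>(F, c). sum_list (map (\<lambda>(G, d). spec m ((\<Sum>i\<in>I. m i) + M')
        (map (\<lambda>s. (F * G * Cst (1 / fact s) * (- DeltaD I) ^ s, cp s c d)) [0..<lbound cp c d]) k)
      Y)) X)"
    unfolding spec_list_def canonC_cmul_concat
    by (auto simp: comp_def split_def intro!: arg_cong[where f = sum_list] map_cong)
  then show ?thesis
    by (simp add: epp_def spec_concat comp_def split_def)
qed

lemma spec_pstar:
  "length bs = nleaves t \<Longrightarrow>
   canonC (evalC sm cp t (map (\<lambda>i. [(m (off + i), bs ! i)]) [0..<nleaves t])) k =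
   spec m (\<Sum>i\<in>{off..<off + nleaves t}. m i) (pstar cp off t bs) k"
proof (induction t arbitrary: off bs k)
  case Lf
  have "canonC [(m off, b)] k = sm (spec_coeff m 1 (m off - k)) b" for b
    by (cases "m off = k") (simp_all add: canonC_def spec_coeff_one)
  with Lf show ?case
    by (simp add: spec_def)
next
  case (Nd l r)
  define nl where "nl = nleaves l"
  define nr where "nr = nleaves r"
  define Ml where "Ml = (\<Sum>i\<in>{off..<off + nl}. m i)"
  define Mr where "Mr = (\<Sum>i\<in>{off + nl..<off + nl + nr}. m i)"
  define Pl :: "('k mpoly \<times> 'c) list" where "Pl = pstar cp off l (take nl bs)"
  define Pr :: "('k mpoly \<times> 'c) list" where "Pr = pstar cp (off + nl) r (drop nl bs)"
  have len: "length bs = nl + nr"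
    using Nd.prems by (simp add: nl_def nr_def)
  have "take nl (map (\<lambda>i. [(m (off + i), bs ! i)]) [0..<nl + nr]) =
      map (\<lambda>i. [(m (off + i), take nl bs ! i)]) [0..<nl]"
    by (rule nth_equalityI) (auto simp: len)
  moreover have "drop nl (map (\<lambda>i. [(m (off + i), bs ! i)]) [0..<nl + nr]) =
      map (\<lambda>i. [(m (off + nl + i), drop nl bs ! i)]) [0..<nr]"
    by (rule nth_equalityI) (auto simp: len add.assoc)
  moreover have IHl: "canonC (evalC sm cp l (map (\<lambda>i. [(m (off + i), take nl bs ! i)]) [0..<nl])) =
      canonC (spec_list m Ml Pl)"
    using Nd.IH(1)[of "take nl bs" off] len by (auto simp: canonC_spec_list Ml_def Pl_def nl_def)
  moreover have IHr: "canonC (evalC sm cp r (map (\<lambda>i. [(m (off + nl + i), drop nl bs ! i)]) [0..<nr])) =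
      canonC (spec_list m Mr Pr)"
    using Nd.IH(2)[of "drop nl bs" "off + nl"] len by (auto simp: canonC_spec_list Mr_def Pr_def nr_def)
  ultimately have "canonC (evalC sm cp (Nd l r) (map (\<lambda>i. [(m (off + i), bs ! i)]) [0..<nleaves (Nd l r)])) k
      = canonC (cmul sm cp (spec_list m Ml Pl) (spec_list m Mr Pr)) k"
    using canonC_cmul_cong[OF IHl IHr] by (simp add: nl_def[symmetric] nr_def[symmetric])
  also have "\<dots> = spec m (Ml + Mr) (epp cp {off..<off + nl} Pl Pr) k"
  proof -
    have "\<forall>x\<in>set Pl. vars_in {off..<off + nl} (fst x)"
      using pstar_vars_in unfolding Pl_def nl_def by blast
    moreover have "\<forall>x\<in>set Pr. vars_in {off + nl..<off + nl + nr} (fst x)"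
      using pstar_vars_in unfolding Pr_def nr_def by blast
    ultimately show ?thesis
      unfolding Ml_def by (rule canonC_cmul_spec_list[rotated]) auto
  qed
  also have "epp cp {off..<off + nl} Pl Pr = pstar cp off (Nd l r) bs"
    by (simp add: Pl_def Pr_def nl_def)
  also have "Ml + Mr = (\<Sum>i\<in>{off..<off + nleaves (Nd l r)}. m i)"
    unfolding Ml_def Mr_def by (simp add: nl_def nr_def sum.atLeastLessThan_concat add.assoc)
  finally show ?case .
qed

text \<open>The same specialisation, computed on a canonical representative \<open>T\<close>
  (monomial \<open>\<mapsto>\<close> coefficient) whose support lies in the finite set \<open>S\<close>.\<close>
definition spec_canon :: "(nat \<Rightarrow> int) \<Rightarrow> int \<Rightarrow> (nat \<Rightarrow>\<^sub>0 nat) set \<Rightarrow> ((nat \<Rightarrow>\<^sub>0 nat) \<Rightarrow> 'c)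
    \<Rightarrow> int \<Rightarrow> 'c" where
  "spec_canon m M S T k = (\<Sum>\<alpha>\<in>S. if M - int (tdeg \<alpha>) = k then sm (mono_weight m \<alpha>) (T \<alpha>) else 0)"

lemma spec_canon_superset:
  assumes "finite S'" "S \<subseteq> S'" "\<And>\<alpha>. \<alpha> \<notin> S \<Longrightarrow> T \<alpha> = 0"
  shows "spec_canon m M S' T = spec_canon m M S T"
  unfolding spec_canon_def using assms by (intro ext sum.mono_neutral_right) auto

lemma spec_canon_zero: "spec_canon m M S (\<lambda>_. 0) k = 0"
  unfolding spec_canon_def by (rule sum.neutral) simp

lemma spec_canon_add: "spec_canon m M S (T + T') k = spec_canon m M S T k + spec_canon m M S T' k"
  unfolding spec_canon_def by (simp add: sum.distrib[symmetric] scale_right_distrib)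
    (intro sum.cong refl, auto simp: scale_right_distrib)

lemma spec_canon_diff: "spec_canon m M S (T - T') k = spec_canon m M S T k - spec_canon m M S T' k"
  unfolding spec_canon_def by (simp add: sum_subtractf[symmetric] scale_right_diff_distrib)
    (intro sum.cong refl, auto simp: scale_right_diff_distrib)

lemma spec_canon_scale: "spec_canon m M S (\<lambda>\<alpha>. sm c (T \<alpha>)) k = sm c (spec_canon m M S T k)"
  unfolding spec_canon_def
  by (simp add: scale_sum_right if_distrib[of "sm c"] scale_left_commute cong: if_cong)
    (intro sum.cong refl, simp add: mult.commute)

lemma spec_canon_sum: "spec_canon m M S (\<Sum>i\<in>A. T i) k = (\<Sum>i\<in>A. spec_canon m M S (T i) k)"
proof (induction A rule: infinite_finite_induct)
  case (insert x F)
  then show ?case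
    by (simp only: sum.insert[OF insert(1,2)] spec_canon_add insert(3))
qed (simp_all add: spec_canon_zero zero_fun_def)

lemma spec_canon_perm_t_term:
  assumes "bij \<sigma>" "finite S" "Poly_Mapping.map_key (inv \<sigma>) ` keys F \<subseteq> S"
  shows "spec_canon m M S (\<lambda>\<beta>. sm (lookup F (Poly_Mapping.map_key \<sigma> \<beta>)) c) k =
    sm (spec_coeff (m \<circ> \<sigma>) F (M - k)) c"
proof -
  let ?inv = "Poly_Mapping.map_key (inv \<sigma>)"
  define h where "h \<beta> = (if M - int (tdeg \<beta>) = k
    then mono_weight m \<beta> * lookup F (Poly_Mapping.map_key \<sigma> \<beta>) else 0)" for \<beta>
  have "spec_canon m M S (\<lambda>\<beta>. sm (lookup F (Poly_Mapping.map_key \<sigma> \<beta>)) c) k = sm (\<Sum>\<beta>\<in>S. h \<beta>) c"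
    unfolding spec_canon_def h_def by (simp add: scale_sum_left if_distrib[of "\<lambda>x. sm x c"] cong: if_cong)
  also have "(\<Sum>\<beta>\<in>S. h \<beta>) = (\<Sum>\<beta>\<in>?inv ` keys F. h \<beta>)"
  proof (rule sum.mono_neutral_right[OF assms(2,3)], intro ballI)
    fix \<beta> assume "\<beta> \<in> S - ?inv ` keys F"
    then have "Poly_Mapping.map_key \<sigma> \<beta> \<notin> keys F"
      using map_key_inv_map_key[OF assms(1), of \<beta>] by (metis DiffD2 image_eqI)
    then show "h \<beta> = 0"
      by (simp add: h_def in_keys_iff)
  qed
  also have "\<dots> = (\<Sum>\<alpha>\<in>keys F. h (?inv \<alpha>))"
    by (rule sum.reindex[unfolded comp_def]) (metis inj_onI map_key_map_key_inv[OF assms(1)])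
  also have "\<dots> = spec_coeff (m \<circ> \<sigma>) F (M - k)"
    unfolding spec_coeff_def lin_ext_def h_def
    by (intro sum.cong refl)
      (auto simp: map_key_map_key_inv[OF assms(1)] tdeg_map_key_inv[OF assms(1)]
        mono_weight_map_key_inv[OF assms(1)])
  finally show ?thesis .
qed

lemma spec_canon_perm_t:
  assumes "bij \<sigma>" "finite S" "\<forall>x\<in>set X. Poly_Mapping.map_key (inv \<sigma>) ` keys (fst x) \<subseteq> S"
  shows "spec_canon m M S (perm_t \<sigma> (canon sm X)) k = spec (m \<circ> \<sigma>) M X k"
  using assms(3)
proof (induction X)
  case Nil
  then show ?case
    by (simp add: perm_t_def canon_def spec_def spec_canon_zero)
next
  case (Cons x X)
  obtain F c where x: "x = (F, c)"
    by force
  have "perm_t \<sigma> (canon sm (x # X)) =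
      (\<lambda>\<beta>. sm (lookup F (Poly_Mapping.map_key \<sigma> \<beta>)) c) + perm_t \<sigma> (canon sm X)"
    by (simp add: perm_t_def canon_def x fun_eq_iff)
  then have "spec_canon m M S (perm_t \<sigma> (canon sm (x # X))) k =
      spec_canon m M S (\<lambda>\<beta>. sm (lookup F (Poly_Mapping.map_key \<sigma> \<beta>)) c) k +
      spec_canon m M S (perm_t \<sigma> (canon sm X)) k"
    by (simp only: spec_canon_add)
  then show ?case
    using Cons spec_canon_perm_t_term[OF assms(1,2), of F m M c k] by (simp add: x spec_def comp_def)
qed

lemma spec_canon_canon:
  assumes "finite S" "\<forall>x\<in>set X. keys (fst x) \<subseteq> S"
  shows "spec_canon m M S (canon sm X) k = spec m M X k"
proof -
  have map_key_id: "Poly_Mapping.map_key id \<alpha> = \<alpha>" for \<alpha> :: "nat \<Rightarrow>\<^sub>0 nat"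
    by (simp add: id_def map_key_id)
  then have "perm_t id (canon sm X) = canon sm X"
    by (simp add: perm_t_def)
  then show ?thesis
    using spec_canon_perm_t[of id S X m M k] assms by (simp add: map_key_id)
qed

text \<open>The generator \<open>F \<Delta>(D) \<otimes> c - F \<otimes> Dc\<close> of the kernel of
  \<open>H^(\<otimes>n) \<otimes> C \<rightarrow> H^(\<otimes>n) \<otimes>\<^sub>H C\<close> is mapped to a combination of the generators
  \<open>(Dc)(q) + q c(q - 1)\<close> of \<open>crel\<close>, one for each degree \<open>q = M - j\<close> occurring in \<open>F\<close>.\<close>
lemma spec_canon_hrel_gen:
  fixes F :: "'k mpoly" and c :: 'c and m :: "nat \<Rightarrow> int"
  assumes "uses_vars_below n F"
  defines "T \<equiv> canon sm [(F * DeltaD {..<n}, c)] - canon sm [(F, D c)]"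
  defines "M \<equiv> (\<Sum>i<n. m i)"
  shows "spec_canon m M (keys (F * DeltaD {..<n}) \<union> keys F) T \<in> crel sm D"
proof -
  let ?S = "keys (F * DeltaD {..<n}) \<union> keys F"
  let ?r = "spec_coeff m F"
  let ?gen = "\<lambda>j. canonC [(M - j, D c), (M - j - 1, sm (of_int (M - j)) c)]"
  define J where "J = (\<lambda>\<alpha>. int (tdeg \<alpha>)) ` keys F"
  have vars: "vars_in {..<n} F"
    using assms(1) by (auto simp: uses_vars_below_def vars_in_def)
  have r_vanish: "?r j = 0" if "j \<notin> J" for j
    unfolding spec_coeff_def lin_ext_def using that by (intro sum.neutral) (auto simp: J_def)
  have spec_T: "spec_canon m M ?S T k =
      sm (spec_coeff m (F * DeltaD {..<n}) (M - k)) c - sm (?r (M - k)) (D c)" for k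
    unfolding T_def spec_canon_diff by (simp add: spec_canon_canon spec_def)
  have gens: "(\<Sum>j\<in>J. sm (- ?r j) (?gen j k)) =
      sm (- ?r (M - k)) (D c) + sm (- ?r (M - k - 1) * of_int (k + 1)) c" for k
  proof -
    have "(\<Sum>j\<in>J. sm (- ?r j) (?gen j k)) =
        (\<Sum>j\<in>J. if j = M - k then sm (- ?r j) (D c) else 0) +
        (\<Sum>j\<in>J. if j = M - k - 1 then sm (- ?r j * of_int (M - j)) c else 0)"
      unfolding sum.distrib[symmetric] canonC_def
      by (intro sum.cong refl) (auto simp: scale_right_distrib)
    also have "\<dots> = sm (- ?r (M - k)) (D c) + sm (- ?r (M - k - 1) * of_int (k + 1)) c"
      using r_vanish by (simp add: sum.delta[OF finite_imageI[OF finite_keys]] J_def)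
    finally show ?thesis .
  qed
  have "sm (spec_coeff m (F * DeltaD {..<n}) (M - k)) c = sm (- ?r (M - k - 1) * of_int (k + 1)) c" for k
    unfolding spec_coeff_mult_DeltaD[OF finite_lessThan vars] M_def[symmetric]
    by (simp add: algebra_simps)
  then have "spec_canon m M ?S T =
      (\<lambda>k. \<Sum>j\<in>J. sm (- ?r j) (?gen j k))"
    unfolding spec_T gens by (simp add: fun_eq_iff scale_minus_left)
  moreover have "\<dots> \<in> crel sm D"
    by (intro crel_sum crel_smul crel_gen) (simp add: J_def)
  ultimately show ?thesis
    by (simp only:)
qed

lemma spec_canon_hrel:
  "T \<in> hrel sm D n \<Longrightarrow>
   \<exists>S. finite S \<and> (\<forall>\<alpha>. \<alpha> \<notin> S \<longrightarrow> T \<alpha> = 0) \<and> spec_canon m (\<Sum>i<n. m i) S T \<in> crel sm D"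
proof (induction T rule: hrel.induct)
  case hrel_zero
  have "spec_canon m (\<Sum>i<n. m i) {} (\<lambda>_. 0) = (\<lambda>_. 0)"
    by (simp add: spec_canon_def fun_eq_iff)
  then show ?case
    using crel_zero by (intro exI[of _ "{}"]) auto
next
  case (hrel_gen F c)
  let ?S = "keys (F * DeltaD {..<n}) \<union> keys F"
  let ?T = "canon sm [(F * DeltaD {..<n}, c)] - canon sm [(F, D c)]"
  have "\<forall>\<alpha>. \<alpha> \<notin> ?S \<longrightarrow> ?T \<alpha> = 0"
    by (auto simp: canon_def in_keys_iff)
  moreover have "spec_canon m (\<Sum>i<n. m i) ?S ?T \<in> crel sm D"
    by (rule spec_canon_hrel_gen[OF hrel_gen])
  moreover have "finite ?S"
    by simp
  ultimately show ?case
    by blast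
next
  case (hrel_add T T')
  then obtain S S' where
    S: "finite S" "\<forall>\<alpha>. \<alpha> \<notin> S \<longrightarrow> T \<alpha> = 0" "spec_canon m (\<Sum>i<n. m i) S T \<in> crel sm D" and
    S': "finite S'" "\<forall>\<alpha>. \<alpha> \<notin> S' \<longrightarrow> T' \<alpha> = 0" "spec_canon m (\<Sum>i<n. m i) S' T' \<in> crel sm D"
    by blast
  then have "spec_canon m (\<Sum>i<n. m i) (S \<union> S') (T + T') =
      spec_canon m (\<Sum>i<n. m i) S T + spec_canon m (\<Sum>i<n. m i) S' T'"
    using spec_canon_superset[of "S \<union> S'" S T] spec_canon_superset[of "S \<union> S'" S' T']
    by (auto simp: fun_eq_iff spec_canon_add)
  then have "spec_canon m (\<Sum>i<n. m i) (S \<union> S') (T + T') \<in> crel sm D"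
    using S(3) S'(3) by (simp add: crel_add)
  moreover have "finite (S \<union> S')" "\<forall>\<alpha>. \<alpha> \<notin> S \<union> S' \<longrightarrow> (T + T') \<alpha> = 0"
    using S S' by auto
  ultimately show ?case
    by blast
next
  case (hrel_smul T a)
  then obtain S where
    S: "finite S" "\<forall>\<alpha>. \<alpha> \<notin> S \<longrightarrow> T \<alpha> = 0" "spec_canon m (\<Sum>i<n. m i) S T \<in> crel sm D"
    by blast
  then have "spec_canon m (\<Sum>i<n. m i) S (\<lambda>\<alpha>. sm a (T \<alpha>)) = (\<lambda>k. sm a (spec_canon m (\<Sum>i<n. m i) S T k))"
    by (simp add: fun_eq_iff spec_canon_scale)
  then show ?case
    using S by (intro exI[of _ S]) (auto intro: crel_smul)
qed

lemma spec_canon_fstar: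
  fixes coef :: "(nat \<Rightarrow> nat) \<Rightarrow> shape \<Rightarrow> 'k"
  assumes x: "\<forall>i<n. x i = [(m i, a i)]" and "finite S"
    and S: "\<And>\<sigma> t. \<sigma> permutes {..<n} \<Longrightarrow> nleaves t = n \<Longrightarrow>
      \<forall>y\<in>set (pstar cp 0 t (map (\<lambda>i. a (\<sigma> i)) [0..<n]) :: ('k mpoly \<times> 'c) list).
        Poly_Mapping.map_key (inv \<sigma>) ` keys (fst y) \<subseteq> S"
  shows "spec_canon m (\<Sum>i<n. m i) S (fstar sm cp n coef a) k = fcoeff sm cp n coef x k"
proof -
  have perm_term: "spec_canon m (\<Sum>i<n. m i) S (perm_t \<sigma> (canon sm (pstar cp 0 t (map (\<lambda>i. a (\<sigma> i)) [0..<n])))) k =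
      canonC (evalC sm cp t (map (\<lambda>i. x (\<sigma> i)) [0..<n])) k"
    if \<sigma>: "\<sigma> permutes {..<n}" and t: "nleaves t = n" for \<sigma> t
  proof -
    let ?bs = "map (\<lambda>i. a (\<sigma> i)) [0..<n]"
    have "spec_canon m (\<Sum>i<n. m i) S (perm_t \<sigma> (canon sm (pstar cp 0 t ?bs))) k =
        spec (m \<circ> \<sigma>) (\<Sum>i<n. m i) (pstar cp 0 t ?bs) k"
      by (rule spec_canon_perm_t[OF permutes_bij[OF \<sigma>] \<open>finite S\<close> S[OF \<sigma> t]])
    also have "\<dots> = spec (m \<circ> \<sigma>) (\<Sum>i\<in>{0..<0 + nleaves t}. (m \<circ> \<sigma>) i) (pstar cp 0 t ?bs) k"
      using sum.permute[OF \<sigma>, of m] t by (simp add: atLeast0LessThan)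
    also have "\<dots> =
        canonC (evalC sm cp t (map (\<lambda>i. [((m \<circ> \<sigma>) (0 + i), ?bs ! i)]) [0..<nleaves t])) k"
      by (rule spec_pstar[symmetric]) (simp add: t)
    also have "map (\<lambda>i. [((m \<circ> \<sigma>) (0 + i), ?bs ! i)]) [0..<nleaves t] = map (\<lambda>i. x (\<sigma> i)) [0..<n]"
      using x permutes_in_image[OF \<sigma>] t by (auto intro!: map_cong)
    finally show ?thesis .
  qed
  show ?thesis
    unfolding fstar_def fcoeff_def sum_fun_apply spec_canon_sum spec_canon_scale
    by (intro sum.cong refl arg_cong[where f = "sm _"] perm_term) simp_all
qed

lemma fcoeff_singletons_in_crel:
  fixes coef :: "(nat \<Rightarrow> nat) \<Rightarrow> shape \<Rightarrow> 'k"
  assumes "\<forall>a. fstar sm cp n coef a \<in> hrel sm D n" and "\<forall>i<n. length (x i) = 1"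
  shows "fcoeff sm cp n coef x \<in> crel sm D"
proof -
  define m where "m i = fst (hd (x i))" for i
  define a where "a i = snd (hd (x i))" for i
  have x: "\<forall>i<n. x i = [(m i, a i)]"
  proof (intro allI impI)
    fix i assume "i < n"
    then show "x i = [(m i, a i)]"
      using assms(2) by (cases "x i") (auto simp: m_def a_def)
  qed
  obtain S0 where S0: "finite S0" "\<forall>\<alpha>. \<alpha> \<notin> S0 \<longrightarrow> fstar sm cp n coef a \<alpha> = 0"
    "spec_canon m (\<Sum>i<n. m i) S0 (fstar sm cp n coef a) \<in> crel sm D"
    using spec_canon_hrel[OF assms(1)[rule_format], where m = m] by blast
  define S where "S = S0 \<union> (\<Union>\<sigma>\<in>{\<sigma>. \<sigma> permutes {..<n}}. \<Union>t\<in>{t. nleaves t = n}.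
    \<Union>y\<in>set (pstar cp 0 t (map (\<lambda>i. a (\<sigma> i)) [0..<n]) :: ('k mpoly \<times> 'c) list).
      Poly_Mapping.map_key (inv \<sigma>) ` keys (fst y))"
  have "finite S"
    unfolding S_def using S0(1) finite_permutations[of "{..<n}"] finite_shapes[of n] by auto
  have "spec_canon m (\<Sum>i<n. m i) S (fstar sm cp n coef a) = fcoeff sm cp n coef x"
  proof (rule ext, rule spec_canon_fstar[OF x \<open>finite S\<close>])
    fix \<sigma> :: "nat \<Rightarrow> nat" and t assume "\<sigma> permutes {..<n}" "nleaves t = n"
    then show "\<forall>y\<in>set (pstar cp 0 t (map (\<lambda>i. a (\<sigma> i)) [0..<n]) :: ('k mpoly \<times> 'c) list).
        Poly_Mapping.map_key (inv \<sigma>) ` keys (fst y) \<subseteq> S"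
      unfolding S_def by blast
  qed
  moreover have "spec_canon m (\<Sum>i<n. m i) S (fstar sm cp n coef a) =
      spec_canon m (\<Sum>i<n. m i) S0 (fstar sm cp n coef a)"
    by (rule spec_canon_superset[OF \<open>finite S\<close>]) (use S0(2) in \<open>auto simp: S_def\<close>)
  ultimately show ?thesis
    using S0(3) by simp
qed

end

theorem theorem3p2:
  fixes sm :: "'k::field_char_0 \<Rightarrow> 'c::ab_group_add \<Rightarrow> 'c"
    and D :: "'c \<Rightarrow> 'c"
    and cp :: "nat \<Rightarrow> 'c \<Rightarrow> 'c \<Rightarrow> 'c"
    and n :: nat
    and coef :: "(nat \<Rightarrow> nat) \<Rightarrow> shape \<Rightarrow> 'k"
  assumes "conformal_algebra sm D cp"
    and "\<forall>a :: nat \<Rightarrow> 'c. fstar sm cp n coef a \<in> hrel sm D n"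
  shows "\<forall>x :: nat \<Rightarrow> (int \<times> 'c) list. fcoeff sm cp n coef x \<in> crel sm D"
proof -
  interpret conformal_alg sm D cp
    using assms(1) by unfold_locales
  show ?thesis
  proof
    fix x
    show "fcoeff sm cp n coef x \<in> crel sm D"
      by (rule fcoeff_in_crel_if_singletons) (rule fcoeff_singletons_in_crel[OF assms(2)])
  qed
qed

end
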